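(* Let $d\ge1$ and $n_1,\dots,n_d\ge1$ be integers, and let $G$ be the graph consisting of two vertices $v$ and $w$ joined by $d$ chains of lengths $n_1,\dots,n_d$ (the $k$-th chain is a path of $n_k$ edges from $v$ to $w$, and distinct chains share no vertices other than $v,w$). Then the pair $\{v,w\}$ has order $\mathrm{lcm}(n_1,\dots,n_d)\left(\frac1{n_1}+\dots+\frac1{n_d}\right)$.
   Context: Graphs may have multiple edges, no loops. For a graph with vertices $u_1,\dots,u_N$, let $c_{ij}$ ($i\neq j$) be the number of edges joining $u_i,u_j$, $c_{ii}=-\sum_{j\ne i}c_{ij}$, $M=(c_{ij})$. A pair $\{u_i,u_j\}$ has order $h>0$ if there is $S\in\mathbb{Z}^N$ with $MS=h(e_i-e_j)$ and $\gcd(s_1-s_N,\dots,s_{N-1}-s_N)=1$; equivalently, the class of $e_i-e_j$ in $\mathbb{Z}^N/\mathrm{Im}(M)$ has order exactly $h$. *)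

theory Defs
  imports Complex_Main
begin

text \<open>A multigraph (no loops) on a finite vertex set V is given by an edge-count
  function c, where c x y is the number of edges joining x and y.\<close>

definition lapM :: "'a set \<Rightarrow> ('a \<Rightarrow> 'a \<Rightarrow> nat) \<Rightarrow> 'a \<Rightarrow> 'a \<Rightarrow> int" where
  "lapM V c x y = (if x = y then - (\<Sum>z\<in>V - {x}. int (c x z)) else int (c x y))"

definition pair_has_order :: "'a set \<Rightarrow> ('a \<Rightarrow> 'a \<Rightarrow> nat) \<Rightarrow> 'a \<Rightarrow> 'a \<Rightarrow> int \<Rightarrow> bool" where
  "pair_has_order V c a b h \<longleftrightarrow> h > 0 \<and>
     (\<exists>S :: 'a \<Rightarrow> int.
        (\<forall>x\<in>V. (\<Sum>y\<in>V. lapM V c x y * S y)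
                 = h * ((if x = a then 1 else 0) - (if x = b then 1 else 0)))
      \<and> Gcd {S x - S y | x y. x \<in> V \<and> y \<in> V} = 1)"

text \<open>The graph of d chains between two vertices v = Vv and w = Vw.
  Chain k (k < d) has n k edges: Vv, Inner k 1, ..., Inner k (n k - 1), Vw.\<close>

datatype cvert = Vv | Vw | Inner nat nat

definition chain_pos :: "(nat \<Rightarrow> nat) \<Rightarrow> nat \<Rightarrow> nat \<Rightarrow> cvert" where
  "chain_pos n k j = (if j = 0 then Vv else if j = n k then Vw else Inner k j)"

definition chains_V :: "nat \<Rightarrow> (nat \<Rightarrow> nat) \<Rightarrow> cvert set" where
  "chains_V d n = {Vv, Vw} \<union> {Inner k j | k j. k < d \<and> 1 \<le> j \<and> j < n k}"

definition chains_c :: "nat \<Rightarrow> (nat \<Rightarrow> nat) \<Rightarrow> cvert \<Rightarrow> cvert \<Rightarrow> nat" where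
  "chains_c d n x y = card {(k, j). k < d \<and> j < n k \<and>
      ((chain_pos n k j = x \<and> chain_pos n k (Suc j) = y) \<or>
       (chain_pos n k j = y \<and> chain_pos n k (Suc j) = x))}"

end

theory Submission
  imports Defs
begin

text \<open>Think of the graph as an electrical network with unit conductances. Put the potential
  \<open>0\<close> at \<open>v\<close>, \<open>L = lcm(n\<^sub>1, \<dots>, n\<^sub>d)\<close> at \<open>w\<close>, and let it grow linearly along each chain, by
  \<open>a\<^sub>k = L / n\<^sub>k\<close> per edge of chain \<open>k\<close>. Kirchhoff's law holds at every inner vertex, and the
  current leaving \<open>v\<close> (entering \<open>w\<close>) is \<open>h = a\<^sub>1 + \<dots> + a\<^sub>d = L (1/n\<^sub>1 + \<dots> + 1/n\<^sub>d)\<close>.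
  The gcd \<open>g\<close> of all potential differences divides \<open>L\<close> and every \<open>a\<^sub>k\<close> (the drop along the
  first edge of chain \<open>k\<close>); as \<open>n\<^sub>k a\<^sub>k = L\<close>, every \<open>n\<^sub>k\<close> divides \<open>L/g\<close>, so \<open>L\<close> divides \<open>L/g\<close> and
  \<open>g = 1\<close>.\<close>

lemma common_divisor_Lcm_quotients_eq_1:
  fixes n :: "'k \<Rightarrow> nat"
  assumes "finite K" and "\<forall>k\<in>K. n k \<noteq> 0"
    and "m dvd Lcm (n ` K)" and "\<forall>k\<in>K. m dvd Lcm (n ` K) div n k"
  shows "m = 1"
proof -
  define L where "L = Lcm (n ` K)"
  have "L \<noteq> 0" using assms(1,2) by (auto simp: L_def)
  obtain q where q: "L = m * q" using assms(3) by (auto simp: L_def)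
  have "m \<noteq> 0" using q \<open>L \<noteq> 0\<close> by auto
  have "n k dvd q" if "k \<in> K" for k
  proof -
    have "m dvd L div n k" using assms(4) that by (simp add: L_def)
    then obtain r where r: "L div n k = m * r" by (rule dvdE)
    have "n k dvd L" using that by (simp add: L_def)
    then have "m * q = n k * (L div n k)" using q by simp
    also have "\<dots> = m * (n k * r)" using r by (simp add: mult.left_commute)
    finally have "q = n k * r" using \<open>m \<noteq> 0\<close> by simp
    then show ?thesis by simp
  qed
  then have "L dvd q" unfolding L_def by (auto intro: Lcm_least)
  moreover have "q dvd L" using q by simp
  ultimately have "L = q" by (rule dvd_antisym)
  then show "m = 1" using q \<open>L \<noteq> 0\<close> by simp
qed

lemma lapM_apply:
  assumes "finite V" and "x \<in> V"
  shows "(\<Sum>y\<in>V. lapM V c x y * S y) = (\<Sum>y\<in>V - {x}. int (c x y) * (S y - S x))"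
proof -
  have "(\<Sum>y\<in>V. lapM V c x y * S y) = lapM V c x x * S x + (\<Sum>y\<in>V - {x}. lapM V c x y * S y)"
    using assms by (simp add: sum.remove)
  also have "(\<Sum>y\<in>V - {x}. lapM V c x y * S y) = (\<Sum>y\<in>V - {x}. int (c x y) * S y)"
    by (rule sum.cong) (auto simp: lapM_def)
  also have "lapM V c x x * S x = - (\<Sum>y\<in>V - {x}. int (c x y) * S x)"
    by (simp add: lapM_def sum_distrib_right)
  finally show ?thesis by (simp add: sum_subtractf right_diff_distrib)
qed

lemma lapM_edge_sum:
  fixes src tgt :: "'e \<Rightarrow> 'a" and S :: "'a \<Rightarrow> int"
  assumes "finite V" and "finite E" and "x \<in> V"
    and edges: "\<forall>e\<in>E. src e \<in> V \<and> tgt e \<in> V \<and> src e \<noteq> tgt e"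
    and c: "\<forall>x y. c x y = card {e\<in>E. (src e = x \<and> tgt e = y) \<or> (src e = y \<and> tgt e = x)}"
  shows "(\<Sum>y\<in>V. lapM V c x y * S y)
    = (\<Sum>e\<in>{e\<in>E. src e = x}. S (tgt e) - S (src e))
    - (\<Sum>e\<in>{e\<in>E. tgt e = x}. S (tgt e) - S (src e))"
proof -
  let ?joins = "\<lambda>e y. (src e = x \<and> tgt e = y) \<or> (src e = y \<and> tgt e = x)"
  have "(\<Sum>y\<in>V. lapM V c x y * S y) = (\<Sum>y\<in>V - {x}. \<Sum>e\<in>E. (if ?joins e y then S y - S x else 0))"
    using lapM_apply[OF assms(1,3)] c \<open>finite E\<close>
    by (simp add: sum.If_cases sum_distrib_right Int_def conj_commute)
  also have "\<dots> = (\<Sum>e\<in>E. \<Sum>y\<in>V - {x}. (if ?joins e y then S y - S x else 0))"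
    by (rule sum.swap)
  also have "\<dots> = (\<Sum>e\<in>E. (if src e = x then S (tgt e) - S (src e) else 0)
                         - (if tgt e = x then S (tgt e) - S (src e) else 0))"
  proof (rule sum.cong[OF refl])
    fix e assume "e \<in> E"
    with edges have "src e \<in> V" "tgt e \<in> V" "src e \<noteq> tgt e" by auto
    then show "(\<Sum>y\<in>V - {x}. (if ?joins e y then S y - S x else 0))
      = (if src e = x then S (tgt e) - S (src e) else 0) - (if tgt e = x then S (tgt e) - S (src e) else 0)"
      using \<open>finite V\<close> by (auto simp: if_distrib[of "\<lambda>b. b \<and> _"] sum.delta')
  qed
  also have "\<dots> = (\<Sum>e\<in>{e\<in>E. src e = x}. S (tgt e) - S (src e))
                   - (\<Sum>e\<in>{e\<in>E. tgt e = x}. S (tgt e) - S (src e))"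
    unfolding sum.inter_filter[OF \<open>finite E\<close>] by (rule sum_subtractf)
  finally show ?thesis .
qed

definition chain_edges :: "nat \<Rightarrow> (nat \<Rightarrow> nat) \<Rightarrow> (nat \<times> nat) set" where
  "chain_edges d n = Sigma {..<d} (\<lambda>k. {..<n k})"

definition chain_src :: "(nat \<Rightarrow> nat) \<Rightarrow> nat \<times> nat \<Rightarrow> cvert" where
  "chain_src n = (\<lambda>(k, j). chain_pos n k j)"

definition chain_tgt :: "(nat \<Rightarrow> nat) \<Rightarrow> nat \<times> nat \<Rightarrow> cvert" where
  "chain_tgt n = (\<lambda>(k, j). chain_pos n k (Suc j))"

lemma finite_chains_V: "finite (chains_V d n)"
proof -
  have "chains_V d n \<subseteq> {Vv, Vw} \<union> (\<lambda>(k, j). Inner k j) ` chain_edges d n"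
    by (auto simp: chains_V_def chain_edges_def)
  then show ?thesis by (rule finite_subset) (simp add: chain_edges_def)
qed

lemma chains_c_eq_card:
  "chains_c d n x y = card {e \<in> chain_edges d n.
     (chain_src n e = x \<and> chain_tgt n e = y) \<or> (chain_src n e = y \<and> chain_tgt n e = x)}"
  unfolding chains_c_def chain_edges_def chain_src_def chain_tgt_def
  by (rule arg_cong[where f = card]) auto

lemma chain_pos_in_chains_V: "k < d \<Longrightarrow> j \<le> n k \<Longrightarrow> chain_pos n k j \<in> chains_V d n"
  by (auto simp: chain_pos_def chains_V_def)

lemma chain_edge_endpoints:
  assumes "e \<in> chain_edges d n"
  shows "chain_src n e \<in> chains_V d n" and "chain_tgt n e \<in> chains_V d n"
    and "chain_src n e \<noteq> chain_tgt n e"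
  using assms by (auto simp: chain_edges_def chain_src_def chain_tgt_def chain_pos_in_chains_V)
    (auto simp: chain_pos_def split: if_split_asm)

lemma lapM_chains:
  assumes "x \<in> chains_V d n"
  shows "(\<Sum>y\<in>chains_V d n. lapM (chains_V d n) (chains_c d n) x y * S y)
    = (\<Sum>e\<in>{e \<in> chain_edges d n. chain_src n e = x}. S (chain_tgt n e) - S (chain_src n e))
    - (\<Sum>e\<in>{e \<in> chain_edges d n. chain_tgt n e = x}. S (chain_tgt n e) - S (chain_src n e))"
  by (rule lapM_edge_sum[OF finite_chains_V _ assms])
    (auto simp: chain_edges_def chain_edge_endpoints chains_c_eq_card)

lemma chain_edges_at_Vv:
  assumes "\<forall>k<d. n k \<ge> 1"
  shows "{e \<in> chain_edges d n. chain_src n e = Vv} = (\<lambda>k. (k, 0)) ` {..<d}"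
    and "{e \<in> chain_edges d n. chain_tgt n e = Vv} = {}"
  using assms
  by (auto simp: chain_edges_def chain_src_def chain_tgt_def chain_pos_def image_iff split: if_split_asm)

lemma chain_edges_at_Vw:
  assumes "\<forall>k<d. n k \<ge> 1"
  shows "{e \<in> chain_edges d n. chain_src n e = Vw} = {}"
    and "{e \<in> chain_edges d n. chain_tgt n e = Vw} = (\<lambda>k. (k, n k - 1)) ` {..<d}"
  using assms
  by (auto simp: chain_edges_def chain_src_def chain_tgt_def chain_pos_def image_iff split: if_split_asm)

lemma chain_edges_at_Inner:
  assumes "Inner k j \<in> chains_V d n"
  shows "{e \<in> chain_edges d n. chain_src n e = Inner k j} = {(k, j)}"
    and "{e \<in> chain_edges d n. chain_tgt n e = Inner k j} = {(k, j - 1)}"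
  using assms
  by (auto simp: chains_V_def chain_edges_def chain_src_def chain_tgt_def chain_pos_def split: if_split_asm)

definition chain_potential :: "(nat \<Rightarrow> nat) \<Rightarrow> nat \<Rightarrow> cvert \<Rightarrow> int" where
  "chain_potential n L x = (case x of Vv \<Rightarrow> 0 | Vw \<Rightarrow> int L | Inner k j \<Rightarrow> int (j * (L div n k)))"

lemma chain_potential_chain_pos:
  "n k dvd L \<Longrightarrow> j \<le> n k \<Longrightarrow> chain_potential n L (chain_pos n k j) = int (j * (L div n k))"
  by (auto simp: chain_potential_def chain_pos_def)

lemma chain_potential_step:
  assumes "e \<in> chain_edges d n" and "\<forall>k<d. n k dvd L"
  shows "chain_potential n L (chain_tgt n e) - chain_potential n L (chain_src n e) = int (L div n (fst e))"
  using assms by (auto simp: chain_edges_def chain_src_def chain_tgt_def chain_potential_chain_pos)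

lemma chain_potential_laplacian:
  assumes "\<forall>k<d. n k \<ge> 1" and "\<forall>k<d. n k dvd L" and "x \<in> chains_V d n"
  shows "(\<Sum>y\<in>chains_V d n. lapM (chains_V d n) (chains_c d n) x y * chain_potential n L y)
    = (\<Sum>k<d. int (L div n k)) * ((if x = Vv then 1 else 0) - (if x = Vw then 1 else 0))"
proof -
  let ?a = "\<lambda>e. int (L div n (fst e))"
  have "(\<Sum>y\<in>chains_V d n. lapM (chains_V d n) (chains_c d n) x y * chain_potential n L y)
    = (\<Sum>e\<in>{e \<in> chain_edges d n. chain_src n e = x}. ?a e)
    - (\<Sum>e\<in>{e \<in> chain_edges d n. chain_tgt n e = x}. ?a e)"
    unfolding lapM_chains[OF assms(3)] using chain_potential_step[OF _ assms(2)]
    by (intro arg_cong2[where f = minus] sum.cong refl) blast+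
  then show ?thesis
    using assms by (cases x) (auto simp: chain_edges_at_Vv chain_edges_at_Vw chain_edges_at_Inner
      sum.reindex inj_on_def sum_negf)
qed

lemma Gcd_chain_potential_differences:
  fixes d :: nat and n :: "nat \<Rightarrow> nat"
  defines "L \<equiv> Lcm (n ` {..<d})"
  assumes "\<forall>k<d. n k \<ge> 1"
  shows "Gcd {chain_potential n L x - chain_potential n L y | x y.
               x \<in> chains_V d n \<and> y \<in> chains_V d n} = 1"
proof -
  let ?S = "chain_potential n L"
  let ?D = "{?S x - ?S y | x y. x \<in> chains_V d n \<and> y \<in> chains_V d n}"
  have "int L \<in> ?D"
  proof -
    have "int L = ?S Vw - ?S Vv" by (simp add: chain_potential_def)
    then show ?thesis by (auto simp: chains_V_def)
  qed
  then have L: "Gcd ?D dvd int L" by (rule Gcd_dvd)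
  have "int (L div n k) \<in> ?D" if "k < d" for k
  proof -
    have e: "(k, 0) \<in> chain_edges d n" using assms(2) that by (auto simp: chain_edges_def)
    have "\<forall>k<d. n k dvd L" by (simp add: L_def)
    then have "int (L div n k) = ?S (chain_tgt n (k, 0)) - ?S (chain_src n (k, 0))"
      using chain_potential_step[OF e] by simp
    then show ?thesis using chain_edge_endpoints[OF e] by blast
  qed
  then have quotients: "Gcd ?D dvd int (L div n k)" if "k < d" for k
    using that by (blast intro: Gcd_dvd)
  have "nat (Gcd ?D) = 1"
  proof (rule common_divisor_Lcm_quotients_eq_1[where K = "{..<d}" and n = n])
    show "\<forall>k\<in>{..<d}. n k \<noteq> 0" using assms(2) by auto
    show "nat (Gcd ?D) dvd Lcm (n ` {..<d})"
      using L by (simp add: L_def flip: int_dvd_int_iff)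
    show "\<forall>k\<in>{..<d}. nat (Gcd ?D) dvd Lcm (n ` {..<d}) div n k"
      using quotients by (simp add: L_def flip: int_dvd_int_iff)
  qed simp
  then show ?thesis by simp
qed

theorem claim2p6:
  fixes d :: nat and n :: "nat \<Rightarrow> nat"
  assumes "d \<ge> 1" and "\<forall>k<d. n k \<ge> 1"
  shows "\<exists>h :: int.
           (of_int h :: rat) = of_nat (Lcm (n ` {..<d})) * (\<Sum>k<d. 1 / of_nat (n k))
         \<and> pair_has_order (chains_V d n) (chains_c d n) Vv Vw h"
proof -
  define L where "L = Lcm (n ` {..<d})"
  define h where "h = (\<Sum>k<d. int (L div n k))"
  have dvd: "\<forall>k<d. n k dvd L" by (simp add: L_def)
  have "L \<noteq> 0" using assms(2) by (auto simp: L_def)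
  have "(of_nat (L div n k) :: rat) = of_nat L * (1 / of_nat (n k))" if "k < d" for k
    using dvd assms(2) that by (auto elim!: dvdE)
  then have "(of_int h :: rat) = of_nat L * (\<Sum>k<d. 1 / of_nat (n k))"
    unfolding h_def of_int_sum of_int_of_nat_eq by (simp add: sum_distrib_left)
  moreover have "h > 0"
    unfolding h_def using assms dvd \<open>L \<noteq> 0\<close>
    by (intro sum_pos) (auto simp: div_greater_zero_iff dvd_imp_le lessThan_empty_iff)
  then have "pair_has_order (chains_V d n) (chains_c d n) Vv Vw h"
    unfolding pair_has_order_def
    using chain_potential_laplacian[OF assms(2) dvd] Gcd_chain_potential_differences[OF assms(2)]
    by (intro conjI exI[of _ "chain_potential n L"]) (simp_all add: h_def L_def)
  ultimately show ?thesis by (auto simp: L_def)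
qed

end
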